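(* The scheme $CD$ (described in the context) can be rewritten with the CG-like structure of the following scheme, called $CD$-red: Step 0: set $k=0$, $y_0\in\mathbb{R}^n$, $r_0:=b-Ay_0$. If $r_0=0$ stop; else set $p_0:=r_0$, $k=k+1$. Compute $a_0:=r_0^Tp_0/p_0^TAp_0$, $\gamma_0:=-a_0$, $y_1:=y_0+a_0p_0$, $r_1:=r_0-a_0Ap_0$. If $r_1=0$ stop; else set $\sigma_0:=\gamma_0\|Ap_0\|^2/p_0^TAp_0$, $\beta_0:=-(1+\sigma_0)$, $p_1:=r_1+\beta_0p_0$, $k=k+1$. Step $k$: compute $a_{k-1}:=r_{k-1}^Tp_{k-1}/p_{k-1}^TAp_{k-1}$, $y_k:=y_{k-1}+a_{k-1}p_{k-1}$, $r_k:=r_{k-1}-a_{k-1}Ap_{k-1}$. If $r_k=0$ stop; else compute $\gamma_{k-1}$ by the recursion below, set $\sigma_{k-1}:=\gamma_{k-1}\|Ap_{k-1}\|^2/p_{k-1}^TAp_{k-1}$, $\beta_{k-1}:=-(1+\sigma_{k-1})$, $p_k:=r_k+\beta_{k-1}p_{k-1}$, $k=k+1$, and repeat Step $k$, provided that the sequence $\{\gamma_k\}$ satisfies $\gamma_0:=-a_0$ and \[ \gamma_k := -\frac{\gamma_{k-1}^2\|Ap_{k-1}\|^2+\gamma_{k-1}\,p_{k-1}^TAp_{k-1}}{p_k^TAp_k},\qquad k\ge 1 . \] In particular, the positions $\gamma_i=-a_i$, $i\ge 0$, in $CD$ satisfy this recursion.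
   Context: Consider the linear system $Ay=b$ with $A\in\mathbb{R}^{n\times n}$ symmetric positive definite and $b\in\mathbb{R}^n$. The $CD$ class is the following iteration, with parameters $\gamma_k\in\mathbb{R}\setminus\{0\}$ for all $k\ge0$. Step 0: set $k=0$, $y_0\in\mathbb{R}^n$, $r_0:=b-Ay_0$, $\gamma_0\neq0$. If $r_0=0$ stop; else set $p_0:=r_0$, $k=k+1$; compute $a_0:=r_0^Tp_0/p_0^TAp_0$, $y_1:=y_0+a_0p_0$, $r_1:=r_0-a_0Ap_0$. If $r_1=0$ stop; else set $\sigma_0:=\gamma_0\|Ap_0\|^2/p_0^TAp_0$, $p_1:=\gamma_0Ap_0-\sigma_0p_0$, $k=k+1$. Step $k$: compute $a_{k-1}:=r_{k-1}^Tp_{k-1}/p_{k-1}^TAp_{k-1}$, $y_k:=y_{k-1}+a_{k-1}p_{k-1}$, $r_k:=r_{k-1}-a_{k-1}Ap_{k-1}$. If $r_k=0$ stop; else set $\sigma_{k-1}:=\gamma_{k-1}\|Ap_{k-1}\|^2/p_{k-1}^TAp_{k-1}$, $\omega_{k-1}:=\frac{\gamma_{k-1}}{\gamma_{k-2}}\frac{p_{k-1}^TAp_{k-1}}{p_{k-2}^TAp_{k-2}}$, $p_k:=\gamma_{k-1}Ap_{k-1}-\sigma_{k-1}p_{k-1}-\omega_{k-1}p_{k-2}$, $k=k+1$, and repeat Step $k$. *)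

theory Defs
  imports "HOL-Analysis.Analysis"
begin

text \<open>The CD iteration with parameter sequence g (= gamma), computed without the
stopping test (the theorem only speaks about indices before termination).
The state at index k is (y_k, r_k, p_k, p_{k-1}), with p_{-1} := 0 (never used).\<close>

fun cd_state :: "real^'n^'n \<Rightarrow> real^'n \<Rightarrow> real^'n \<Rightarrow> (nat \<Rightarrow> real) \<Rightarrow> nat
                 \<Rightarrow> (real^'n) \<times> (real^'n) \<times> (real^'n) \<times> (real^'n)" where
  "cd_state A b y0 g 0 = (y0, b - A *v y0, b - A *v y0, 0)"
| "cd_state A b y0 g (Suc k) = (case cd_state A b y0 g k of (y, r, p, q) \<Rightarrow>
     let a = (r \<bullet> p) / (p \<bullet> (A *v p));
         y' = y + a *\<^sub>R p;
         r' = r - a *\<^sub>R (A *v p);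
         \<sigma> = g k * (norm (A *v p))^2 / (p \<bullet> (A *v p));
         p' = (if k = 0 then g k *\<^sub>R (A *v p) - \<sigma> *\<^sub>R p
               else g k *\<^sub>R (A *v p) - \<sigma> *\<^sub>R p
                    - ((g k / g (k - 1)) * ((p \<bullet> (A *v p)) / (q \<bullet> (A *v q)))) *\<^sub>R q)
     in (y', r', p', p))"

definition cd_y where "cd_y A b y0 g k = fst (cd_state A b y0 g k)"
definition cd_r where "cd_r A b y0 g k = fst (snd (cd_state A b y0 g k))"
definition cd_p where "cd_p A b y0 g k = fst (snd (snd (cd_state A b y0 g k)))"
definition cd_a where
  "cd_a A b y0 g k = (cd_r A b y0 g k \<bullet> cd_p A b y0 g k)
                     / (cd_p A b y0 g k \<bullet> (A *v cd_p A b y0 g k))"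

fun red_state :: "real^'n^'n \<Rightarrow> real^'n \<Rightarrow> real^'n \<Rightarrow> nat
                 \<Rightarrow> (real^'n) \<times> (real^'n) \<times> (real^'n) \<times> real" where
  "red_state A b y0 0 = (let r = b - A *v y0; p = r; a = (r \<bullet> p) / (p \<bullet> (A *v p))
                         in (y0, r, p, - a))"
| "red_state A b y0 (Suc k) = (case red_state A b y0 k of (y, r, p, g) \<Rightarrow>
     let a = (r \<bullet> p) / (p \<bullet> (A *v p));
         y' = y + a *\<^sub>R p;
         r' = r - a *\<^sub>R (A *v p);
         \<sigma> = g * (norm (A *v p))^2 / (p \<bullet> (A *v p));
         \<beta> = - (1 + \<sigma>);
         p' = r' + \<beta> *\<^sub>R p;
         g' = - (g^2 * (norm (A *v p))^2 + g * (p \<bullet> (A *v p))) / (p' \<bullet> (A *v p'))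
     in (y', r', p', g'))"

definition red_y where "red_y A b y0 k = fst (red_state A b y0 k)"
definition red_r where "red_r A b y0 k = fst (snd (red_state A b y0 k))"
definition red_p where "red_p A b y0 k = fst (snd (snd (red_state A b y0 k)))"
definition red_g where "red_g A b y0 k = snd (snd (snd (red_state A b y0 k)))"

definition gamma_rec :: "real^'n^'n \<Rightarrow> real^'n \<Rightarrow> real^'n \<Rightarrow> (nat \<Rightarrow> real) \<Rightarrow> nat \<Rightarrow> bool" where
  "gamma_rec A b y0 g m \<longleftrightarrow> (\<forall>k. 1 \<le> k \<and> k < m \<longrightarrow>
     g k = - (g (k - 1) ^ 2 * (norm (A *v cd_p A b y0 g (k - 1)))^2
              + g (k - 1) * (cd_p A b y0 g (k - 1) \<bullet> (A *v cd_p A b y0 g (k - 1))))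
           / (cd_p A b y0 g k \<bullet> (A *v cd_p A b y0 g k)))"

end

theory Submission
  imports Defs
begin

text \<open>If \<gamma>_k = -a_k, the CD update \<gamma>_k A p_k equals r_{k+1} - r_k, and by induction the CD
directions satisfy the CG relations r_k^T p_k = |r_k|^2, r_k^T A p_k = p_k^T A p_k and
p_{k+1} = r_{k+1} + \<beta>_k p_k. The induction step rests on the identity
|r_{k+1}|^2 = \<gamma>_k^2 |A p_k|^2 + \<gamma>_k p_k^T A p_k: combined with \<gamma>_{k+1} p_{k+1}^T A p_{k+1} = -|r_{k+1}|^2
it shows that the coefficient \<omega>_{k+1} of p_k in the three-term recurrence is \<beta>_k, so the recurrence
collapses to the two-term one. The same identity turns \<gamma>_{k+1} = -a_{k+1} = -r_{k+1}^T p_{k+1} / p_{k+1}^T A p_{k+1}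
into the recursion for \<gamma>, so that the recursion together with \<gamma>_0 = -a_0 is equivalent to
\<gamma>_k = -a_k for all k.\<close>

definition cd_beta :: "real^'n^'n \<Rightarrow> real \<Rightarrow> real^'n \<Rightarrow> real" where
  "cd_beta A \<gamma> v = - (1 + \<gamma> * (norm (A *v v))\<^sup>2 / (v \<bullet> (A *v v)))"

context
  fixes A :: "real^'n^'n" and b y0 :: "real^'n"
begin

lemma red_y_0: "red_y A b y0 0 = y0"
  and red_r_0: "red_r A b y0 0 = b - A *v y0"
  and red_p_0: "red_p A b y0 0 = b - A *v y0"
  and red_g_0: "red_g A b y0 0 = - ((b - A *v y0) \<bullet> (b - A *v y0) / ((b - A *v y0) \<bullet> (A *v (b - A *v y0))))"
  by (simp_all add: red_y_def red_r_def red_p_def red_g_def Let_def)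

lemma red_y_Suc: "red_y A b y0 (Suc k) = red_y A b y0 k
    + (red_r A b y0 k \<bullet> red_p A b y0 k / (red_p A b y0 k \<bullet> (A *v red_p A b y0 k))) *\<^sub>R red_p A b y0 k"
  by (cases "red_state A b y0 k") (simp add: red_y_def red_r_def red_p_def Let_def)

lemma red_r_Suc: "red_r A b y0 (Suc k) = red_r A b y0 k
    - (red_r A b y0 k \<bullet> red_p A b y0 k / (red_p A b y0 k \<bullet> (A *v red_p A b y0 k))) *\<^sub>R (A *v red_p A b y0 k)"
  by (cases "red_state A b y0 k") (simp add: red_r_def red_p_def Let_def)

lemma red_p_Suc: "red_p A b y0 (Suc k) = red_r A b y0 (Suc k) + cd_beta A (red_g A b y0 k) (red_p A b y0 k) *\<^sub>R red_p A b y0 k"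
  by (cases "red_state A b y0 k") (simp add: red_r_def red_p_def red_g_def cd_beta_def Let_def)

lemma red_g_Suc: "red_g A b y0 (Suc k) =
    - ((red_g A b y0 k)\<^sup>2 * (norm (A *v red_p A b y0 k))\<^sup>2 + red_g A b y0 k * (red_p A b y0 k \<bullet> (A *v red_p A b y0 k)))
    / (red_p A b y0 (Suc k) \<bullet> (A *v red_p A b y0 (Suc k)))"
  by (cases "red_state A b y0 k") (simp add: red_p_def red_g_def Let_def)

end

locale cd_method =
  fixes A :: "real^'n^'n" and b y0 :: "real^'n" and g :: "nat \<Rightarrow> real"
  assumes symmetric: "transpose A = A"
    and positive_definite: "\<And>x. x \<noteq> 0 \<Longrightarrow> 0 < x \<bullet> (A *v x)"
    and gamma_nonzero: "\<And>k. g k \<noteq> 0"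
begin

abbreviation "y \<equiv> cd_y A b y0 g"
abbreviation "r \<equiv> cd_r A b y0 g"
abbreviation "p \<equiv> cd_p A b y0 g"
abbreviation "a \<equiv> cd_a A b y0 g"

lemma inner_mult_commute: "u \<bullet> (A *v v) = v \<bullet> (A *v u)"
  by (metis dot_lmul_matrix inner_commute symmetric vector_transpose_matrix)

lemma quadratic_form_eq_0_iff: "v \<bullet> (A *v v) = 0 \<longleftrightarrow> v = 0"
  using positive_definite by force

lemma cd_y_0: "y 0 = y0" and cd_r_0: "r 0 = b - A *v y0" and cd_p_0: "p 0 = b - A *v y0"
  by (simp_all add: cd_y_def cd_r_def cd_p_def)

lemma cd_y_Suc: "y (Suc k) = y k + a k *\<^sub>R p k"
  by (cases "cd_state A b y0 g k") (simp add: cd_y_def cd_r_def cd_p_def cd_a_def Let_def)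

lemma cd_r_Suc: "r (Suc k) = r k - a k *\<^sub>R (A *v p k)"
  by (cases "cd_state A b y0 g k") (simp add: cd_r_def cd_p_def cd_a_def Let_def)

lemma cd_p_1: "p (Suc 0) = g 0 *\<^sub>R (A *v p 0) - (g 0 * (norm (A *v p 0))\<^sup>2 / (p 0 \<bullet> (A *v p 0))) *\<^sub>R p 0"
  by (simp add: cd_p_def Let_def)

lemma cd_p_Suc_Suc: "p (Suc (Suc k)) = g (Suc k) *\<^sub>R (A *v p (Suc k))
   - (g (Suc k) * (norm (A *v p (Suc k)))\<^sup>2 / (p (Suc k) \<bullet> (A *v p (Suc k)))) *\<^sub>R p (Suc k)
   - (g (Suc k) / g k * (p (Suc k) \<bullet> (A *v p (Suc k)) / (p k \<bullet> (A *v p k)))) *\<^sub>R p k"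
  by (cases "cd_state A b y0 g k") (simp add: cd_p_def Let_def)

lemma cd_a_mult_quadratic_form: "a k * (p k \<bullet> (A *v p k)) = r k \<bullet> p k"
  by (cases "p k = 0") (simp_all add: cd_a_def quadratic_form_eq_0_iff)

lemma cd_r_Suc_orthogonal: "r (Suc k) \<bullet> p k = 0"
  using cd_a_mult_quadratic_form[of k]
  by (simp add: cd_r_Suc inner_diff_left inner_commute[of "A *v p k" "p k"])

lemma A_orthogonalize_conjugate:
  "(c *\<^sub>R (A *v v) - (c * (norm (A *v v))\<^sup>2 / (v \<bullet> (A *v v))) *\<^sub>R v) \<bullet> (A *v v) = 0"
  by (cases "v = 0") (simp_all add: inner_diff_left dot_square_norm quadratic_form_eq_0_iff)

lemma cd_p_Suc_conjugate: "p (Suc k) \<bullet> (A *v p k) = 0"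
proof (induction k)
  case 0
  show ?case unfolding cd_p_1 by (rule A_orthogonalize_conjugate)
next
  case (Suc k)
  then have "p k \<bullet> (A *v p (Suc k)) = 0" by (simp add: inner_mult_commute)
  then show ?case
    unfolding cd_p_Suc_Suc
    by (subst inner_diff_left, subst A_orthogonalize_conjugate) simp
qed

lemma norm_cd_r_Suc_exact:
  assumes exact: "g k = - a k"
    and inner_r_p: "r k \<bullet> p k = (norm (r k))\<^sup>2"
    and inner_r_Ap: "r k \<bullet> (A *v p k) = p k \<bullet> (A *v p k)"
  shows "(norm (r (Suc k)))\<^sup>2 = (g k)\<^sup>2 * (norm (A *v p k))\<^sup>2 + g k * (p k \<bullet> (A *v p k))"
proof -
  have r_Suc: "r (Suc k) = r k + g k *\<^sub>R (A *v p k)"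
    using exact by (simp add: cd_r_Suc)
  have g_quadratic: "g k * (p k \<bullet> (A *v p k)) = - (norm (r k))\<^sup>2"
    using exact cd_a_mult_quadratic_form[of k] inner_r_p by simp
  have "(norm (r (Suc k)))\<^sup>2
      = (norm (r k))\<^sup>2 + 2 * g k * (r k \<bullet> (A *v p k)) + (g k)\<^sup>2 * (norm (A *v p k))\<^sup>2"
    unfolding r_Suc power2_norm_eq_inner
    by (simp add: inner_add_left inner_add_right inner_commute power2_eq_square algebra_simps)
  also have "\<dots> = (g k)\<^sup>2 * (norm (A *v p k))\<^sup>2 + g k * (p k \<bullet> (A *v p k))"
    using g_quadratic inner_r_Ap by (simp add: algebra_simps)
  finally show ?thesis .
qed

lemma cd_r_p_Suc_invariants:
  assumes direction: "p (Suc k) = r (Suc k) + cd_beta A (g k) (p k) *\<^sub>R p k"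
  shows "r (Suc k) \<bullet> p (Suc k) = (norm (r (Suc k)))\<^sup>2"
    and "r (Suc k) \<bullet> (A *v p (Suc k)) = p (Suc k) \<bullet> (A *v p (Suc k))"
proof -
  show "r (Suc k) \<bullet> p (Suc k) = (norm (r (Suc k)))\<^sup>2"
    unfolding direction
    by (simp add: inner_add_right cd_r_Suc_orthogonal dot_square_norm)
  have "r (Suc k) = p (Suc k) - cd_beta A (g k) (p k) *\<^sub>R p k"
    using direction by simp
  then show "r (Suc k) \<bullet> (A *v p (Suc k)) = p (Suc k) \<bullet> (A *v p (Suc k))"
    using cd_p_Suc_conjugate[of k]
    by (simp add: inner_diff_left inner_mult_commute[of "p k"])
qed

lemma quadratic_form_cd_p_nonzero:
  assumes "r k \<bullet> p k = (norm (r k))\<^sup>2" and "r k \<noteq> 0"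
  shows "p k \<bullet> (A *v p k) \<noteq> 0"
  using assms by (auto simp: quadratic_form_eq_0_iff)

lemma cd_p_Suc_Suc_exact:
  assumes exact: "g k = - a k" "g (Suc k) = - a (Suc k)"
    and nonzero: "r k \<noteq> 0" "r (Suc k) \<noteq> 0"
    and inner_r_p: "r k \<bullet> p k = (norm (r k))\<^sup>2"
    and inner_r_Ap: "r k \<bullet> (A *v p k) = p k \<bullet> (A *v p k)"
    and direction: "p (Suc k) = r (Suc k) + cd_beta A (g k) (p k) *\<^sub>R p k"
  shows "p (Suc (Suc k)) = r (Suc (Suc k)) + cd_beta A (g (Suc k)) (p (Suc k)) *\<^sub>R p (Suc k)"
proof -
  define s where "s = p k \<bullet> (A *v p k)"
  define s' where "s' = p (Suc k) \<bullet> (A *v p (Suc k))"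
  define \<beta> where "\<beta> = cd_beta A (g k) (p k)"
  have inner_r_p': "r (Suc k) \<bullet> p (Suc k) = (norm (r (Suc k)))\<^sup>2"
    using cd_r_p_Suc_invariants(1)[OF direction] .
  have s: "s \<noteq> 0"
    using quadratic_form_cd_p_nonzero[OF inner_r_p nonzero(1)] by (simp add: s_def)
  have s': "s' \<noteq> 0"
    using quadratic_form_cd_p_nonzero[OF inner_r_p' nonzero(2)] by (simp add: s'_def)
  have "g (Suc k) * s' = - (norm (r (Suc k)))\<^sup>2"
    using exact(2) cd_a_mult_quadratic_form[of "Suc k"] inner_r_p' by (simp add: s'_def)
  also have "\<dots> = - ((g k)\<^sup>2 * (norm (A *v p k))\<^sup>2 + g k * s)"
    using norm_cd_r_Suc_exact[OF exact(1) inner_r_p inner_r_Ap] by (simp add: s_def)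
  finally have "g (Suc k) / g k * (s' / s) = \<beta>"
    using s gamma_nonzero[of k]
    by (simp add: \<beta>_def cd_beta_def s_def field_simps power2_eq_square)
  then have "p (Suc (Suc k)) = g (Suc k) *\<^sub>R (A *v p (Suc k))
      - (g (Suc k) * (norm (A *v p (Suc k)))\<^sup>2 / s') *\<^sub>R p (Suc k) - \<beta> *\<^sub>R p k"
    by (simp add: cd_p_Suc_Suc s_def s'_def)
  moreover have "g (Suc k) *\<^sub>R (A *v p (Suc k)) = r (Suc (Suc k)) - r (Suc k)"
    using exact(2) by (simp add: cd_r_Suc)
  moreover have "\<beta> *\<^sub>R p k = p (Suc k) - r (Suc k)"
    using direction by (simp add: \<beta>_def)
  ultimately show ?thesis
    by (simp add: cd_beta_def s'_def algebra_simps)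
qed

lemma cd_exact_invariants:
  assumes "\<forall>i\<le>k. g i = - a i" and "\<forall>i\<le>k. r i \<noteq> 0"
  shows "r k \<bullet> p k = (norm (r k))\<^sup>2 \<and> r k \<bullet> (A *v p k) = p k \<bullet> (A *v p k)
    \<and> p (Suc k) = r (Suc k) + cd_beta A (g k) (p k) *\<^sub>R p k"
  using assms
proof (induction k)
  case 0
  have r_0: "r 0 = p 0"
    by (simp add: cd_r_0 cd_p_0)
  with 0 have "r (Suc 0) = p 0 + g 0 *\<^sub>R (A *v p 0)"
    by (simp add: cd_r_Suc)
  with r_0 show ?case
    by (simp add: cd_p_1 cd_beta_def dot_square_norm algebra_simps)
next
  case (Suc k)
  then have invariants: "r k \<bullet> p k = (norm (r k))\<^sup>2" "r k \<bullet> (A *v p k) = p k \<bullet> (A *v p k)"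
      "p (Suc k) = r (Suc k) + cd_beta A (g k) (p k) *\<^sub>R p k"
    by auto
  show ?case
    using cd_r_p_Suc_invariants[OF invariants(3)] Suc.prems
      cd_p_Suc_Suc_exact[OF _ _ _ _ invariants]
    by simp
qed

lemma cd_exact_inner_r_p_Suc:
  assumes "\<forall>i\<le>k. g i = - a i" and "\<forall>i\<le>k. r i \<noteq> 0"
  shows "r (Suc k) \<bullet> p (Suc k) = (g k)\<^sup>2 * (norm (A *v p k))\<^sup>2 + g k * (p k \<bullet> (A *v p k))"
proof -
  note invariants = cd_exact_invariants[OF assms]
  have "r (Suc k) \<bullet> p (Suc k) = (norm (r (Suc k)))\<^sup>2"
    using invariants cd_r_p_Suc_invariants(1) by blast
  also have "\<dots> = (g k)\<^sup>2 * (norm (A *v p k))\<^sup>2 + g k * (p k \<bullet> (A *v p k))"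
    using invariants assms(1) norm_cd_r_Suc_exact by blast
  finally show ?thesis .
qed

lemma gamma_rec_of_exact:
  assumes exact: "\<forall>k<m. g k = - a k" and nonzero: "\<forall>k\<le>m. r k \<noteq> 0"
  shows "gamma_rec A b y0 g m"
  unfolding gamma_rec_def
proof (intro allI impI)
  fix k assume k: "1 \<le> k \<and> k < m"
  then obtain j where j: "k = Suc j" by (cases k) auto
  have "r (Suc j) \<bullet> p (Suc j) = (g j)\<^sup>2 * (norm (A *v p j))\<^sup>2 + g j * (p j \<bullet> (A *v p j))"
    using k j exact nonzero by (intro cd_exact_inner_r_p_Suc) auto
  moreover have "g (Suc j) = - a (Suc j)"
    using k j exact by simp
  ultimately show "g k = - (g (k - 1) ^ 2 * (norm (A *v p (k - 1)))\<^sup>2 + g (k - 1) * (p (k - 1) \<bullet> (A *v p (k - 1))))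
      / (p k \<bullet> (A *v p k))"
    using j by (simp add: cd_a_def add_divide_distrib diff_divide_distrib)
qed

lemma exact_of_gamma_rec:
  assumes start: "g 0 = - a 0" and rec: "gamma_rec A b y0 g m" and nonzero: "\<forall>k\<le>m. r k \<noteq> 0"
  shows "k < m \<Longrightarrow> g k = - a k"
proof (induction k rule: less_induct)
  case (less k)
  show ?case
  proof (cases k)
    case 0
    then show ?thesis using start by simp
  next
    case (Suc j)
    have "r (Suc j) \<bullet> p (Suc j) = (g j)\<^sup>2 * (norm (A *v p j))\<^sup>2 + g j * (p j \<bullet> (A *v p j))"
      using less Suc nonzero by (intro cd_exact_inner_r_p_Suc) auto
    moreover have "g (Suc j) = - ((g j)\<^sup>2 * (norm (A *v p j))\<^sup>2 + g j * (p j \<bullet> (A *v p j)))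
        / (p (Suc j) \<bullet> (A *v p (Suc j)))"
      using rec less.prems Suc unfolding gamma_rec_def by force
    ultimately show ?thesis
      using Suc by (simp add: cd_a_def add_divide_distrib diff_divide_distrib)
  qed
qed

lemma red_y_r_Suc_eq_cd:
  assumes "red_y A b y0 k = y k" "red_r A b y0 k = r k" "red_p A b y0 k = p k"
  shows "red_y A b y0 (Suc k) = y (Suc k) \<and> red_r A b y0 (Suc k) = r (Suc k)"
  using assms by (simp add: red_y_Suc red_r_Suc cd_y_Suc cd_r_Suc cd_a_def)

lemma red_eq_cd:
  assumes exact: "\<forall>k<m. g k = - a k" and rec: "gamma_rec A b y0 g m"
    and nonzero: "\<forall>k\<le>m. r k \<noteq> 0"
  shows "k \<le> m \<Longrightarrow> red_y A b y0 k = y k \<and> red_r A b y0 k = r k \<and> red_p A b y0 k = p k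
    \<and> (k < m \<longrightarrow> red_g A b y0 k = g k)"
proof (induction k)
  case 0
  then show ?case
    using exact by (simp add: red_y_0 red_r_0 red_p_0 red_g_0 cd_y_0 cd_r_0 cd_p_0 cd_a_def)
next
  case (Suc k)
  then have IH: "red_y A b y0 k = y k" "red_r A b y0 k = r k" "red_p A b y0 k = p k"
      "red_g A b y0 k = g k"
    by auto
  note y_r = red_y_r_Suc_eq_cd[OF IH(1-3)]
  have "p (Suc k) = r (Suc k) + cd_beta A (g k) (p k) *\<^sub>R p k"
    using exact nonzero Suc.prems cd_exact_invariants[of k] by auto
  then have p: "red_p A b y0 (Suc k) = p (Suc k)"
    using y_r by (simp add: red_p_Suc IH)
  have "red_g A b y0 (Suc k) = g (Suc k)" if "Suc k < m"
    using rec that unfolding gamma_rec_def by (force simp: red_g_Suc IH p)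
  then show ?case
    using y_r p by blast
qed

end

theorem lemma4:
  fixes A :: "real^'n^'n" and b y0 :: "real^'n" and g :: "nat \<Rightarrow> real" and m :: nat
  assumes sym: "transpose A = A"
    and pd: "\<forall>x. x \<noteq> 0 \<longrightarrow> 0 < x \<bullet> (A *v x)"
    and gnz: "\<forall>k. g k \<noteq> 0"
    and nostop: "\<forall>j\<le>m. cd_r A b y0 g j \<noteq> 0"
  shows "((g 0 = - cd_a A b y0 g 0 \<and> gamma_rec A b y0 g m) \<longrightarrow>
            (\<forall>k\<le>Suc m. cd_y A b y0 g k = red_y A b y0 k \<and> cd_r A b y0 g k = red_r A b y0 k)
          \<and> (\<forall>k\<le>m. cd_p A b y0 g k = red_p A b y0 k)
          \<and> (\<forall>k<m. red_g A b y0 k = g k))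
       \<and> ((\<forall>k<m. g k = - cd_a A b y0 g k) \<longrightarrow> gamma_rec A b y0 g m)"
proof -
  interpret cd_method A b y0 g
    using sym pd gnz by unfold_locales auto
  show ?thesis
  proof (intro conjI impI)
    assume start_rec: "g 0 = - a 0 \<and> gamma_rec A b y0 g m"
    then have "\<forall>k<m. g k = - a k"
      using exact_of_gamma_rec nostop by blast
    note agree = red_eq_cd[OF this conjunct2[OF start_rec] nostop]
    show "\<forall>k\<le>Suc m. y k = red_y A b y0 k \<and> r k = red_r A b y0 k"
      using agree red_y_r_Suc_eq_cd[of m] by (metis le_Suc_eq order_refl)
    show "\<forall>k\<le>m. p k = red_p A b y0 k"
      using agree by simp
    show "\<forall>k<m. red_g A b y0 k = g k"
      using agree by simp
  next
    show "\<forall>k<m. g k = - a k \<Longrightarrow> gamma_rec A b y0 g m"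
      using gamma_rec_of_exact nostop by blast
  qed
qed

end
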